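(* For every $j\ge1$, $a'=1,\dots,p_1$, $b'=1,\dots,p_2$, $$\Big(\sum_{a=1}^{p_1}\frac{\partial}{\partial t_{j,a}}+\sum_{b=1}^{p_2}\frac{\partial}{\partial\bar t_{j,b}}\Big)X=0\qquad\text{for }X\in\{L_{a'},\ \bar L_{b'},\ \mathcal A_{a'},\ \bar{\mathcal A}_{b'}\}.$$
   Context: $\mu$ finite Borel measure on an interval; weights $w_{1,a}$ ($a\le p_1$), $w_{2,b}$ ($b\le p_2$); compositions $\vec n_\ell\in\mathbb N^{p_\ell}$; each $i\in\mathbb Z_+$ is uniquely $i=q|\vec n_\ell|+n_{\ell,1}+\dots+n_{\ell,a-1}+r$ ($0\le r<n_{\ell,a}$), $a_\ell(i)=a$, $k_\ell(i)=qn_{\ell,a}+r$; moment matrix $g_{i,j}=\int x^{k_1(i)+k_2(j)}w_{1,a_1(i)}w_{2,a_2(j)}d\mu$. $e_{\ell,a}(k)=e_i$ with $a_\ell(i)=a,k_\ell(i)=k$; $\Lambda_{\ell,a}=\sum_ke_{\ell,a}(k)e_{\ell,a}(k+1)^\top$; $\chi_{\ell,a}(x)=\sum_ke_{\ell,a}(k)x^k$. Real times $t=(t_{j,a},\bar t_{j,b})$; $W_0(t)=\exp(\sum_{a,j}t_{j,a}\Lambda_{1,a}^j)$, $\bar W_0(t)=\exp(\sum_{b,j}\bar t_{j,b}(\Lambda_{2,b}^\top)^j)$, $g(t)=W_0(t)g\bar W_0(t)^{-1}$ (integrals assumed convergent), assumed to factorize smoothly in $t$ as $g(t)=S(t)^{-1}\bar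 S(t)$ with $S$ unit lower triangular and $\bar S$ upper triangular invertible. $L_a=S\Lambda_{1,a}S^{-1}$, $\bar L_b=\bar S\Lambda_{2,b}^\top\bar S^{-1}$, $\mathcal A_a(x,t)=S(t)\chi_{1,a}(x)$, $\bar{\mathcal A}_b(x,t)=(\bar S(t)^{-1})^\top\chi_{2,b}(x)$ (derivatives taken at fixed $x$). *)

theory Defs
  imports "HOL-Analysis.Analysis"
begin

type_synonym mat = "nat \<Rightarrow> nat \<Rightarrow> real"
type_synonym vec = "nat \<Rightarrow> real"
(* times: fst t j a = t_{j,a},  snd t j b = tbar_{j,b}  (only j \<ge> 1 is used) *)
type_synonym times = "(nat \<Rightarrow> nat \<Rightarrow> real) \<times> (nat \<Rightarrow> nat \<Rightarrow> real)"

definition cabs :: "nat \<Rightarrow> (nat \<Rightarrow> nat) \<Rightarrow> nat" where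
  "cabs p n = (\<Sum>a=1..p. n a)"

text \<open>i = q|n| + n_1 + ... + n_(a-1) + r with 0 \<le> r < n_a;  a(i) = a, k(i) = q n_a + r.\<close>
definition aidx :: "nat \<Rightarrow> (nat \<Rightarrow> nat) \<Rightarrow> nat \<Rightarrow> nat" where
  "aidx p n i = (LEAST a. i mod cabs p n < (\<Sum>b=1..a. n b))"

definition kidx :: "nat \<Rightarrow> (nat \<Rightarrow> nat) \<Rightarrow> nat \<Rightarrow> nat" where
  "kidx p n i = (i div cabs p n) * n (aidx p n i)
                + (i mod cabs p n - (\<Sum>b=1..<aidx p n i. n b))"

text \<open>Lambda_a = sum_k e_a(k) e_a(k+1)^T, written entrywise.\<close>
definition Lam :: "nat \<Rightarrow> (nat \<Rightarrow> nat) \<Rightarrow> nat \<Rightarrow> mat" where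
  "Lam p n a = (\<lambda>i i'. if aidx p n i = a \<and> aidx p n i' = a \<and> kidx p n i' = Suc (kidx p n i)
                        then 1 else 0)"

text \<open>chi_a(x) = sum_k e_a(k) x^k.\<close>
definition chi :: "nat \<Rightarrow> (nat \<Rightarrow> nat) \<Rightarrow> nat \<Rightarrow> real \<Rightarrow> vec" where
  "chi p n a x = (\<lambda>i. if aidx p n i = a then x ^ kidx p n i else 0)"

definition mmul :: "mat \<Rightarrow> mat \<Rightarrow> mat" where
  "mmul A B = (\<lambda>i k. \<Sum>m. A i m * B m k)"

definition mvec :: "mat \<Rightarrow> vec \<Rightarrow> vec" where
  "mvec A v = (\<lambda>i. \<Sum>m. A i m * v m)"

definition mtr :: "mat \<Rightarrow> mat" where
  "mtr A = (\<lambda>i k. A k i)"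

definition idm :: mat where
  "idm = (\<lambda>i k. if i = k then 1 else 0)"

definition unit_lower :: "mat \<Rightarrow> bool" where
  "unit_lower S \<longleftrightarrow> (\<forall>i k. i < k \<longrightarrow> S i k = 0) \<and> (\<forall>i. S i i = 1)"

definition upper :: "mat \<Rightarrow> bool" where
  "upper S \<longleftrightarrow> (\<forall>i k. k < i \<longrightarrow> S i k = 0)"

text \<open>An upper triangular infinite matrix is invertible (within upper triangular matrices)
  iff its diagonal entries are nonzero.\<close>
definition upper_invertible :: "mat \<Rightarrow> bool" where
  "upper_invertible S \<longleftrightarrow> upper S \<and> (\<forall>i. S i i \<noteq> 0)"

definition ltinv :: "mat \<Rightarrow> mat" where
  "ltinv S = (THE T. unit_lower T \<and> mmul S T = idm)"

definition utinv :: "mat \<Rightarrow> mat" where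
  "utinv S = (THE T. upper T \<and> mmul S T = idm)"

definition fin_times :: "times \<Rightarrow> bool" where
  "fin_times t \<longleftrightarrow> finite {(j, a). fst t j a \<noteq> 0} \<and> finite {(j, b). snd t j b \<noteq> 0}"

text \<open>Entries of g(t) = W_0(t) g Wbar_0(t)^{-1}: since Lambda_{1,a} chi_{1,a} = x chi_{1,a},
  W_0(t) acts on the a-block of rows as multiplication by exp(sum_j t_{j,a} x^j), and
  Wbar_0(t)^{-1} on the b-block of columns as multiplication by exp(- sum_j tbar_{j,b} x^j).\<close>
definition gt :: "real measure \<Rightarrow> nat \<Rightarrow> (nat \<Rightarrow> nat) \<Rightarrow> (nat \<Rightarrow> real \<Rightarrow> real)
                  \<Rightarrow> nat \<Rightarrow> (nat \<Rightarrow> nat) \<Rightarrow> (nat \<Rightarrow> real \<Rightarrow> real) \<Rightarrow> times \<Rightarrow> mat" where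
  "gt M p1 n1 w1 p2 n2 w2 t = (\<lambda>i k.
     LINT x|M. x ^ (kidx p1 n1 i + kidx p2 n2 k) * w1 (aidx p1 n1 i) x * w2 (aidx p2 n2 k) x
       * exp ((\<Sum>j. fst t (Suc j) (aidx p1 n1 i) * x ^ Suc j)
              - (\<Sum>j. snd t (Suc j) (aidx p2 n2 k) * x ^ Suc j)))"

definition upd1 :: "times \<Rightarrow> nat \<Rightarrow> nat \<Rightarrow> real \<Rightarrow> times" where
  "upd1 t j a s = ((fst t)(j := (fst t j)(a := s)), snd t)"

definition upd2 :: "times \<Rightarrow> nat \<Rightarrow> nat \<Rightarrow> real \<Rightarrow> times" where
  "upd2 t j b s = (fst t, (snd t)(j := (snd t j)(b := s)))"

definition D1 :: "nat \<Rightarrow> nat \<Rightarrow> (times \<Rightarrow> real) \<Rightarrow> times \<Rightarrow> real" where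
  "D1 j a F t = deriv (\<lambda>s. F (upd1 t j a s)) (fst t j a)"

definition D2 :: "nat \<Rightarrow> nat \<Rightarrow> (times \<Rightarrow> real) \<Rightarrow> times \<Rightarrow> real" where
  "D2 j b F t = deriv (\<lambda>s. F (upd2 t j b s)) (snd t j b)"

end

theory Submission
  imports Defs
begin

text \<open>Let \<open>\<delta>\<close> be the sum of the partial derivatives in all \<open>t_{j,a}\<close> and \<open>tbar_{j,b}\<close>.
  The entry \<open>(i,k)\<close> of \<open>g(t)\<close> depends on the times only through
  \<open>t_{j,a(i)} - tbar_{j,b(k)}\<close>, so \<open>\<delta> g = 0\<close>. Differentiating \<open>g = S^{-1} Sbar\<close> gives
  \<open>S^{-1} \<delta>Sbar + \<delta>(S^{-1}) Sbar = 0\<close>, where \<open>\<delta>(S^{-1})\<close> is strictly lower and \<open>\<delta>Sbar\<close>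
  upper triangular; such a sum vanishes only term by term. Thus \<open>\<delta>\<close> annihilates the entries of
  \<open>S^{-1}\<close> and \<open>Sbar\<close>, hence of \<open>S\<close> and \<open>Sbar^{-1}\<close>, and finally of \<open>L_a\<close>, \<open>Lbar_b\<close>,
  \<open>A_a\<close>, \<open>Abar_b\<close>: by triangularity and the finite row supports of \<open>\<Lambda>\<close>, their entries are
  finite sums of products of those entries with constants.\<close>

section \<open>Derivatives along the diagonal direction\<close>

lemma upd1_self [simp]: "upd1 t j a (fst t j a) = t"
  by (simp add: upd1_def)

lemma upd2_self [simp]: "upd2 t j b (snd t j b) = t"
  by (simp add: upd2_def)

lemma fin_times_upd1: "fin_times t \<Longrightarrow> fin_times (upd1 t j a s)"
proof -
  assume "fin_times t"
  moreover have "{(j', a'). fst (upd1 t j a s) j' a' \<noteq> 0} \<subseteq> insert (j, a) {(j, a). fst t j a \<noteq> 0}"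
    by (auto simp: upd1_def split: if_splits)
  ultimately show ?thesis
    unfolding fin_times_def by (auto simp: upd1_def intro: finite_subset)
qed

lemma fin_times_upd2: "fin_times t \<Longrightarrow> fin_times (upd2 t j b s)"
proof -
  assume "fin_times t"
  moreover have "{(j', b'). snd (upd2 t j b s) j' b' \<noteq> 0} \<subseteq> insert (j, b) {(j, b). snd t j b \<noteq> 0}"
    by (auto simp: upd2_def split: if_splits)
  ultimately show ?thesis
    unfolding fin_times_def by (auto simp: upd2_def intro: finite_subset)
qed

lemma fin_times_finite_support:
  assumes "fin_times t"
  shows "finite {m. fst t m a \<noteq> 0}" and "finite {m. snd t m b \<noteq> 0}"
proof -
  have "{m. fst t m a \<noteq> 0} \<subseteq> fst ` {(j, a). fst t j a \<noteq> 0}"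
       "{m. snd t m b \<noteq> 0} \<subseteq> fst ` {(j, b). snd t j b \<noteq> 0}"
    by force+
  then show "finite {m. fst t m a \<noteq> 0}" "finite {m. snd t m b \<noteq> 0}"
    using assms unfolding fin_times_def by (auto intro: finite_subset)
qed

lemma real_differentiable_iff_field_differentiable:
  fixes f :: "real \<Rightarrow> real"
  shows "f differentiable at x \<longleftrightarrow> f field_differentiable at x"
  by (simp flip: DERIV_deriv_iff_real_differentiable DERIV_deriv_iff_field_differentiable)

lemma D1_arith:
  assumes "(\<lambda>s. F (upd1 t j a s)) differentiable at (fst t j a)"
      and "(\<lambda>s. G (upd1 t j a s)) differentiable at (fst t j a)"
  shows "D1 j a (\<lambda>x. F x + G x) t = D1 j a F t + D1 j a G t"
    and "D1 j a (\<lambda>x. F x - G x) t = D1 j a F t - D1 j a G t"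
    and "D1 j a (\<lambda>x. F x * G x) t = F t * D1 j a G t + D1 j a F t * G t"
  using assms unfolding D1_def by (simp_all add: real_differentiable_iff_field_differentiable)

lemma D2_arith:
  assumes "(\<lambda>s. F (upd2 t j b s)) differentiable at (snd t j b)"
      and "(\<lambda>s. G (upd2 t j b s)) differentiable at (snd t j b)"
  shows "D2 j b (\<lambda>x. F x + G x) t = D2 j b F t + D2 j b G t"
    and "D2 j b (\<lambda>x. F x - G x) t = D2 j b F t - D2 j b G t"
    and "D2 j b (\<lambda>x. F x * G x) t = F t * D2 j b G t + D2 j b F t * G t"
  using assms unfolding D2_def by (simp_all add: real_differentiable_iff_field_differentiable)

lemma D2_eq_uminus_D1:
  assumes shift: "\<And>s. F (upd2 t j b s) = F (upd1 t j a (fst t j a + snd t j b - s))"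
    and diff: "(\<lambda>s. F (upd1 t j a s)) differentiable at (fst t j a)"
  shows "D2 j b F t = - D1 j a F t"
proof -
  let ?u = "fst t j a" and ?v = "snd t j b"
  have "DERIV (\<lambda>s. F (upd1 t j a s)) ((\<lambda>s. ?u + ?v - s) ?v) :> D1 j a F t"
    using diff by (simp add: D1_def DERIV_deriv_iff_real_differentiable)
  moreover have "DERIV (\<lambda>s. ?u + ?v - s) ?v :> -1"
    by (auto intro!: derivative_eq_intros)
  ultimately have "DERIV (\<lambda>s. F (upd1 t j a (?u + ?v - s))) ?v :> D1 j a F t * -1"
    by (rule DERIV_chain2[where f="\<lambda>s. F (upd1 t j a s)" and g="\<lambda>s. ?u + ?v - s"])
  then have "DERIV (\<lambda>s. F (upd1 t j a (?u + ?v - s))) ?v :> - D1 j a F t"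
    by simp
  then show ?thesis
    unfolding D2_def shift by (rule DERIV_imp_deriv)
qed

definition diag_differentiable :: "nat \<Rightarrow> nat \<Rightarrow> nat \<Rightarrow> times \<Rightarrow> (times \<Rightarrow> real) \<Rightarrow> bool" where
  "diag_differentiable p1 p2 j t F \<longleftrightarrow>
     (\<forall>a\<in>{1..p1}. (\<lambda>s. F (upd1 t j a s)) differentiable at (fst t j a)) \<and>
     (\<forall>b\<in>{1..p2}. (\<lambda>s. F (upd2 t j b s)) differentiable at (snd t j b))"

definition diag_deriv :: "nat \<Rightarrow> nat \<Rightarrow> nat \<Rightarrow> times \<Rightarrow> (times \<Rightarrow> real) \<Rightarrow> real" where
  "diag_deriv p1 p2 j t F = (\<Sum>a=1..p1. D1 j a F t) + (\<Sum>b=1..p2. D2 j b F t)"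

definition diag_invariant :: "nat \<Rightarrow> nat \<Rightarrow> nat \<Rightarrow> times \<Rightarrow> (times \<Rightarrow> real) \<Rightarrow> bool" where
  "diag_invariant p1 p2 j t F \<longleftrightarrow> diag_differentiable p1 p2 j t F \<and> diag_deriv p1 p2 j t F = 0"

context
  fixes p1 p2 j :: nat and t :: times
begin

lemma diag_differentiable_const: "diag_differentiable p1 p2 j t (\<lambda>_. c)"
  by (simp add: diag_differentiable_def)

lemma diag_differentiable_add:
  "diag_differentiable p1 p2 j t F \<Longrightarrow> diag_differentiable p1 p2 j t G
   \<Longrightarrow> diag_differentiable p1 p2 j t (\<lambda>x. F x + G x)"
  by (simp add: diag_differentiable_def)

lemma diag_differentiable_diff:
  "diag_differentiable p1 p2 j t F \<Longrightarrow> diag_differentiable p1 p2 j t G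
   \<Longrightarrow> diag_differentiable p1 p2 j t (\<lambda>x. F x - G x)"
  by (simp add: diag_differentiable_def)

lemma diag_differentiable_mult:
  "diag_differentiable p1 p2 j t F \<Longrightarrow> diag_differentiable p1 p2 j t G
   \<Longrightarrow> diag_differentiable p1 p2 j t (\<lambda>x. F x * G x)"
  by (simp add: diag_differentiable_def)

lemma diag_differentiable_divide:
  "diag_differentiable p1 p2 j t F \<Longrightarrow> diag_differentiable p1 p2 j t G \<Longrightarrow> G t \<noteq> 0
   \<Longrightarrow> diag_differentiable p1 p2 j t (\<lambda>x. F x / G x)"
  by (simp add: diag_differentiable_def)

lemma diag_differentiable_sum:
  "finite A \<Longrightarrow> (\<And>m. m \<in> A \<Longrightarrow> diag_differentiable p1 p2 j t (F m))
   \<Longrightarrow> diag_differentiable p1 p2 j t (\<lambda>x. \<Sum>m\<in>A. F m x)"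
  by (simp add: diag_differentiable_def)

lemmas diag_differentiable_intros =
  diag_differentiable_const diag_differentiable_add diag_differentiable_diff
  diag_differentiable_mult diag_differentiable_divide diag_differentiable_sum

lemma diag_deriv_const [simp]: "diag_deriv p1 p2 j t (\<lambda>_. c) = 0"
  by (simp add: diag_deriv_def D1_def D2_def)

lemma diag_deriv_add:
  "diag_differentiable p1 p2 j t F \<Longrightarrow> diag_differentiable p1 p2 j t G
   \<Longrightarrow> diag_deriv p1 p2 j t (\<lambda>x. F x + G x) = diag_deriv p1 p2 j t F + diag_deriv p1 p2 j t G"
  by (simp add: diag_differentiable_def diag_deriv_def D1_arith D2_arith sum.distrib)

lemma diag_deriv_mult:
  "diag_differentiable p1 p2 j t F \<Longrightarrow> diag_differentiable p1 p2 j t G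
   \<Longrightarrow> diag_deriv p1 p2 j t (\<lambda>x. F x * G x)
       = F t * diag_deriv p1 p2 j t G + diag_deriv p1 p2 j t F * G t"
  by (simp add: diag_differentiable_def diag_deriv_def D1_arith D2_arith sum.distrib
      sum_distrib_left sum_distrib_right algebra_simps)

lemma diag_deriv_sum:
  assumes "finite A" "\<And>m. m \<in> A \<Longrightarrow> diag_differentiable p1 p2 j t (F m)"
  shows "diag_deriv p1 p2 j t (\<lambda>x. \<Sum>m\<in>A. F m x) = (\<Sum>m\<in>A. diag_deriv p1 p2 j t (F m))"
  using assms
proof (induction A rule: finite_induct)
  case (insert a A)
  then show ?case
    by (simp add: diag_deriv_add diag_differentiable_sum)
qed simp

lemma diag_deriv_sum_mult:
  assumes "finite A"
    and "\<And>m. m \<in> A \<Longrightarrow> diag_differentiable p1 p2 j t (F m)"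
    and "\<And>m. m \<in> A \<Longrightarrow> diag_differentiable p1 p2 j t (G m)"
  shows "diag_deriv p1 p2 j t (\<lambda>x. \<Sum>m\<in>A. F m x * G m x)
         = (\<Sum>m\<in>A. F m t * diag_deriv p1 p2 j t (G m) + diag_deriv p1 p2 j t (F m) * G m t)"
  using assms by (simp add: diag_deriv_sum diag_differentiable_mult diag_deriv_mult)

lemma diag_cong:
  assumes "fin_times t" and "\<And>t'. fin_times t' \<Longrightarrow> F t' = G t'"
  shows "diag_differentiable p1 p2 j t F \<longleftrightarrow> diag_differentiable p1 p2 j t G"
    and "diag_deriv p1 p2 j t F = diag_deriv p1 p2 j t G"
proof -
  have "(\<lambda>s. F (upd1 t j a s)) = (\<lambda>s. G (upd1 t j a s))"
       "(\<lambda>s. F (upd2 t j b s)) = (\<lambda>s. G (upd2 t j b s))" for a b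
    using assms by (simp_all add: fin_times_upd1 fin_times_upd2)
  then show "diag_differentiable p1 p2 j t F \<longleftrightarrow> diag_differentiable p1 p2 j t G"
    and "diag_deriv p1 p2 j t F = diag_deriv p1 p2 j t G"
    unfolding diag_differentiable_def diag_deriv_def D1_def D2_def
    by (simp_all add: assms)
qed

lemma diag_deriv_sum_mult_const:
  assumes "fin_times t" and "finite A"
    and "\<And>t'. fin_times t' \<Longrightarrow> (\<Sum>m\<in>A. F m t' * G m t') = c"
    and "\<And>m. m \<in> A \<Longrightarrow> diag_differentiable p1 p2 j t (F m)"
    and "\<And>m. m \<in> A \<Longrightarrow> diag_differentiable p1 p2 j t (G m)"
  shows "(\<Sum>m\<in>A. F m t * diag_deriv p1 p2 j t (G m) + diag_deriv p1 p2 j t (F m) * G m t) = 0"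
proof -
  have "diag_deriv p1 p2 j t (\<lambda>t'. \<Sum>m\<in>A. F m t' * G m t') = diag_deriv p1 p2 j t (\<lambda>_. c)"
    by (rule diag_cong(2)[OF assms(1)]) (rule assms(3))
  then show ?thesis
    by (simp add: assms diag_deriv_sum_mult)
qed

lemma diag_invariant_const: "diag_invariant p1 p2 j t (\<lambda>_. c)"
  by (simp add: diag_invariant_def diag_differentiable_const)

lemma diag_invariant_mult:
  "diag_invariant p1 p2 j t F \<Longrightarrow> diag_invariant p1 p2 j t G
   \<Longrightarrow> diag_invariant p1 p2 j t (\<lambda>x. F x * G x)"
  by (simp add: diag_invariant_def diag_differentiable_mult diag_deriv_mult)

lemma diag_invariant_sum:
  "finite A \<Longrightarrow> (\<And>m. m \<in> A \<Longrightarrow> diag_invariant p1 p2 j t (F m))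
   \<Longrightarrow> diag_invariant p1 p2 j t (\<lambda>x. \<Sum>m\<in>A. F m x)"
  by (simp add: diag_invariant_def diag_differentiable_sum diag_deriv_sum)

lemmas diag_invariant_intros = diag_invariant_const diag_invariant_mult diag_invariant_sum

lemma diag_invariant_if_const:
  "fin_times t \<Longrightarrow> (\<And>t'. fin_times t' \<Longrightarrow> F t' = c) \<Longrightarrow> diag_invariant p1 p2 j t F"
  using diag_cong[of F "\<lambda>_. c"] by (simp add: diag_invariant_def diag_differentiable_const)

lemma diag_differentiable_cong:
  "fin_times t \<Longrightarrow> (\<And>t'. fin_times t' \<Longrightarrow> F t' = G t') \<Longrightarrow> diag_differentiable p1 p2 j t G
   \<Longrightarrow> diag_differentiable p1 p2 j t F"
  using diag_cong(1)[of F G] by simp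

lemma diag_invariant_cong:
  "fin_times t \<Longrightarrow> (\<And>t'. fin_times t' \<Longrightarrow> F t' = G t') \<Longrightarrow> diag_invariant p1 p2 j t G
   \<Longrightarrow> diag_invariant p1 p2 j t F"
  using diag_cong[of F G] by (simp add: diag_invariant_def)

end

section \<open>Block indices\<close>

lemma cabs_pos:
  assumes "1 \<le> p" and "\<forall>a\<in>{1..p}. 1 \<le> n a"
  shows "0 < cabs p n"
proof -
  have "n 1 \<le> (\<Sum>a=1..p. n a)"
    using assms by (intro member_le_sum) auto
  then show ?thesis
    using assms unfolding cabs_def by force
qed

lemma aidx_in_range:
  assumes "1 \<le> p" and "\<forall>a\<in>{1..p}. 1 \<le> n a"
  shows "aidx p n i \<in> {1..p}"
proof -
  let ?P = "\<lambda>a. i mod cabs p n < (\<Sum>b=1..a. n b)"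
  have "?P p"
    using cabs_pos[OF assms] unfolding cabs_def by simp
  then have "aidx p n i \<le> p" and "?P (aidx p n i)"
    unfolding aidx_def by (auto intro: Least_le LeastI)
  moreover have "\<not> ?P 0"
    by simp
  ultimately show ?thesis
    by (metis atLeastAtMost_iff less_one not_le)
qed

lemma finite_kidx_fiber:
  assumes "1 \<le> p" and "\<forall>a\<in>{1..p}. 1 \<le> n a"
  shows "finite {m. kidx p n m = K}"
proof (rule finite_subset)
  show "{m. kidx p n m = K} \<subseteq> {..< Suc K * cabs p n}"
  proof
    fix m
    assume "m \<in> {m. kidx p n m = K}"
    then have "kidx p n m = K"
      by simp
    moreover have "m div cabs p n \<le> (m div cabs p n) * n (aidx p n m)"
      using aidx_in_range[OF assms] assms by simp
    moreover have "(m div cabs p n) * n (aidx p n m) \<le> kidx p n m"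
      by (simp add: kidx_def)
    ultimately have "m div cabs p n < Suc K"
      by linarith
    then show "m \<in> {..< Suc K * cabs p n}"
      using cabs_pos[OF assms] by (simp add: div_less_iff_less_mult)
  qed
qed simp

lemma finite_Lam_row_support:
  assumes "1 \<le> p" and "\<forall>a\<in>{1..p}. 1 \<le> n a"
  shows "finite {m. Lam p n a r m \<noteq> 0}"
  using finite_kidx_fiber[OF assms, of "Suc (kidx p n r)"]
  by (rule finite_subset[rotated]) (auto simp: Lam_def split: if_splits)

section \<open>Shift invariance of the moment matrix\<close>

lemma suminf_power_fun_upd:
  fixes f :: "nat \<Rightarrow> real"
  assumes "finite {m. f m \<noteq> 0}" and "1 \<le> j"
  shows "(\<Sum>m. (f(j := c)) (Suc m) * x ^ Suc m) = (\<Sum>m. f (Suc m) * x ^ Suc m) + (c - f j) * x ^ j"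
proof -
  have "finite {m. f (Suc m) \<noteq> 0}"
    using finite_vimageI[OF assms(1) inj_Suc] by (simp add: vimage_def)
  then have "summable (\<lambda>m. f (Suc m) * x ^ Suc m)"
    by (rule summable_finite) simp
  moreover have "(\<lambda>m. if m = j - 1 then (c - f j) * x ^ j else 0) sums ((c - f j) * x ^ j)"
    by (rule sums_single)
  ultimately have "(\<lambda>m. f (Suc m) * x ^ Suc m + (if m = j - 1 then (c - f j) * x ^ j else 0))
      sums ((\<Sum>m. f (Suc m) * x ^ Suc m) + (c - f j) * x ^ j)"
    by (intro sums_add summable_sums)
  moreover have "(\<lambda>m. f (Suc m) * x ^ Suc m + (if m = j - 1 then (c - f j) * x ^ j else 0))
      = (\<lambda>m. (f(j := c)) (Suc m) * x ^ Suc m)"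
    using assms(2) by (auto simp: fun_eq_iff left_diff_distrib simp del: power_Suc)
  ultimately show ?thesis
    by (simp add: sums_iff)
qed

lemma gt_upd1_other:
  assumes "a \<noteq> aidx p1 n1 i"
  shows "gt M p1 n1 w1 p2 n2 w2 (upd1 t j a s) i k = gt M p1 n1 w1 p2 n2 w2 t i k"
proof -
  have "fst (upd1 t j a s) m (aidx p1 n1 i) = fst t m (aidx p1 n1 i)" for m
    using assms by (simp add: upd1_def)
  then show ?thesis
    by (simp add: gt_def upd1_def)
qed

lemma gt_upd2_other:
  assumes "b \<noteq> aidx p2 n2 k"
  shows "gt M p1 n1 w1 p2 n2 w2 (upd2 t j b s) i k = gt M p1 n1 w1 p2 n2 w2 t i k"
proof -
  have "snd (upd2 t j b s) m (aidx p2 n2 k) = snd t m (aidx p2 n2 k)" for m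
    using assms by (simp add: upd2_def)
  then show ?thesis
    by (simp add: gt_def upd2_def)
qed

lemma gt_upd2_eq_upd1:
  fixes p1 p2 i k :: nat and n1 n2 :: "nat \<Rightarrow> nat"
  assumes "fin_times t" and "1 \<le> j"
  defines "a \<equiv> aidx p1 n1 i" and "b \<equiv> aidx p2 n2 k"
  shows "gt M p1 n1 w1 p2 n2 w2 (upd2 t j b s) i k
       = gt M p1 n1 w1 p2 n2 w2 (upd1 t j a (fst t j a + snd t j b - s)) i k"
proof -
  let ?r = "fst t j a + snd t j b - s"
  have "snd (upd2 t j b s) m b = ((\<lambda>m. snd t m b)(j := s)) m"
       "fst (upd1 t j a ?r) m a = ((\<lambda>m. fst t m a)(j := ?r)) m" for m
    by (simp_all add: upd1_def upd2_def)
  then have "(\<Sum>m. fst t (Suc m) a * x ^ Suc m) - (\<Sum>m. snd (upd2 t j b s) (Suc m) b * x ^ Suc m)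
      = (\<Sum>m. fst (upd1 t j a ?r) (Suc m) a * x ^ Suc m) - (\<Sum>m. snd t (Suc m) b * x ^ Suc m)"
    for x
    using suminf_power_fun_upd[OF fin_times_finite_support(2)[OF assms(1)] assms(2), of b s x]
          suminf_power_fun_upd[OF fin_times_finite_support(1)[OF assms(1)] assms(2), of a ?r x]
    by (simp add: algebra_simps)
  moreover have "fst (upd2 t j b s) = fst t" and "snd (upd1 t j a ?r) = snd t"
    by (simp_all add: upd1_def upd2_def)
  ultimately show ?thesis
    unfolding gt_def a_def[symmetric] b_def[symmetric] by (simp only:)
qed

lemma diag_deriv_gt:
  assumes "fin_times t" and "1 \<le> j"
    and p1: "1 \<le> p1" "\<forall>a\<in>{1..p1}. 1 \<le> n1 a"
    and p2: "1 \<le> p2" "\<forall>b\<in>{1..p2}. 1 \<le> n2 b"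
    and "diag_differentiable p1 p2 j t (\<lambda>t'. gt M p1 n1 w1 p2 n2 w2 t' i k)"
  shows "diag_deriv p1 p2 j t (\<lambda>t'. gt M p1 n1 w1 p2 n2 w2 t' i k) = 0"
proof -
  define G where "G = (\<lambda>t'. gt M p1 n1 w1 p2 n2 w2 t' i k)"
  define a where "a = aidx p1 n1 i"
  define b where "b = aidx p2 n2 k"
  have a: "a \<in> {1..p1}" and b: "b \<in> {1..p2}"
    unfolding a_def b_def using aidx_in_range p1 p2 by blast+
  have "D1 j a' G t = 0" if "a' \<noteq> a" for a'
    using that by (simp add: D1_def G_def a_def gt_upd1_other)
  then have "(\<Sum>a'=1..p1. D1 j a' G t) = D1 j a G t"
    using a by (simp add: sum.remove[of _ a] sum.neutral)
  moreover have "D2 j b' G t = 0" if "b' \<noteq> b" for b'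
    using that by (simp add: D2_def G_def b_def gt_upd2_other)
  then have "(\<Sum>b'=1..p2. D2 j b' G t) = D2 j b G t"
    using b by (simp add: sum.remove[of _ b] sum.neutral)
  moreover have "D2 j b G t = - D1 j a G t"
    using assms a unfolding G_def a_def b_def diag_differentiable_def
    by (intro D2_eq_uminus_D1 gt_upd2_eq_upd1) auto
  ultimately have "diag_deriv p1 p2 j t G = 0"
    by (simp add: diag_deriv_def)
  then show ?thesis
    by (simp add: G_def)
qed

section \<open>Infinite triangular matrices\<close>

lemma sum_single_support:
  assumes "finite A" and "a \<in> A" and "\<And>m. m \<in> A \<Longrightarrow> m \<noteq> a \<Longrightarrow> f m = 0"
  shows "sum f A = f a"
  using assms by (simp add: sum.remove[of A a] sum.neutral)

lemma mmul_lower_left: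
  assumes "\<And>i m. i < m \<Longrightarrow> A i m = 0"
  shows "mmul A B i k = (\<Sum>m\<le>i. A i m * B m k)"
  unfolding mmul_def using assms by (intro suminf_finite) auto

lemma mmul_upper_right:
  assumes "\<And>m k. k < m \<Longrightarrow> B m k = 0"
  shows "mmul A B i k = (\<Sum>m\<le>k. A i m * B m k)"
  unfolding mmul_def using assms by (intro suminf_finite) auto

lemma mvec_lower:
  assumes "\<And>i m. i < m \<Longrightarrow> A i m = 0"
  shows "mvec A v i = (\<Sum>m\<le>i. A i m * v m)"
  unfolding mvec_def using assms by (intro suminf_finite) auto

lemma lower_triangular_null:
  fixes T :: mat and x :: vec
  assumes lower: "\<And>i m. i < m \<Longrightarrow> T i m = 0" and diag: "\<And>i. T i i \<noteq> 0"
    and null: "\<And>i. i < n \<Longrightarrow> (\<Sum>m<n. T i m * x m) = 0"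
  shows "i < n \<Longrightarrow> x i = 0"
proof (induction i rule: less_induct)
  case (less i)
  have "(\<Sum>m<n. T i m * x m) = T i i * x i"
    using less lower by (intro sum_single_support) (auto simp: nat_neq_iff)
  then show ?case
    using null[OF less.prems] diag[of i] by simp
qed

lemma upper_triangular_null:
  fixes U :: mat and y :: vec
  assumes "upper U" and diag: "\<And>i. U i i \<noteq> 0"
    and null: "\<And>i. i \<le> k \<Longrightarrow> (\<Sum>m\<le>k. U i m * y m) = 0"
  shows "i \<le> k \<Longrightarrow> y i = 0"
proof (induction "k - i" arbitrary: i rule: less_induct)
  case less
  have "(\<Sum>m\<le>k. U i m * y m) = U i i * y i"
    using less \<open>upper U\<close> unfolding upper_def
    by (intro sum_single_support) (auto simp: nat_neq_iff)
  then show ?case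
    using null[OF less.prems] diag[of i] by simp
qed

text \<open>The proof goes row by row: once the rows above row \<open>i\<close> vanish, row \<open>i\<close> of the
  identity \<open>L B + A U = 0\<close> restricted to the columns \<open>k < i\<close> is a triangular system
  for the entries of \<open>A\<close>.\<close>

lemma unit_lower_upper_split_null:
  assumes L: "unit_lower L" and U: "upper_invertible U"
    and A: "\<And>i k. i \<le> k \<Longrightarrow> A i k = 0" and B: "upper B"
    and eq: "\<And>i k. (\<Sum>m\<le>i. L i m * B m k + A i m * U m k) = 0"
  shows "A i k = 0 \<and> B i k = 0"
proof -
  have "\<forall>k. A i k = 0 \<and> B i k = 0"
  proof (induction i rule: less_induct)
    case (less i)
    have row: "B i k + (\<Sum>m<i. A i m * U m k) = 0" for k
    proof -
      have "(\<Sum>m<i. L i m * B m k) = 0"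
        using less by simp
      moreover have "L i i = 1"
        using L by (simp add: unit_lower_def)
      ultimately show ?thesis
        using eq[of i k] A[of i i] by (simp add: lessThan_Suc_atMost[symmetric] sum.distrib)
    qed
    have "A i m = 0" if "m < i" for m
    proof (rule lower_triangular_null[where T="mtr U" and n=i])
      show "mtr U k m = 0" if "k < m" for k m
        using that U by (simp add: mtr_def upper_invertible_def upper_def)
      show "mtr U k k \<noteq> 0" for k
        using U by (simp add: mtr_def upper_invertible_def)
      show "(\<Sum>m<i. mtr U k m * A i m) = 0" if "k < i" for k
        using row[of k] B that by (simp add: mtr_def upper_def mult.commute)
    qed (use that in simp)
    then have "A i k = 0" for k
      using A by (cases "i \<le> k") auto
    then show ?case
      using row by simp
  qed
  then show ?thesis
    by blast
qed

lemma unit_lower_right_inverse_rec: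
  assumes "unit_lower S" and "mmul S T = idm"
  shows "T i k = idm i k - (\<Sum>m<i. S i m * T m k)"
proof -
  have "idm i k = (\<Sum>m\<le>i. S i m * T m k)"
    using assms by (simp add: unit_lower_def mmul_lower_left[symmetric])
  then show ?thesis
    using assms(1) by (simp add: unit_lower_def lessThan_Suc_atMost[symmetric])
qed

lemma upper_row_sum_split:
  assumes "upper U" and "i \<le> k"
  shows "(\<Sum>m\<le>k. U i m * f m) = U i i * f i + (\<Sum>m\<in>{i<..k}. U i m * f m)"
proof -
  have "(\<Sum>m\<le>k. U i m * f m) = (\<Sum>m\<in>insert i {i<..k}. U i m * f m)"
    using assms unfolding upper_def by (intro sum.mono_neutral_right) auto
  then show ?thesis
    by simp
qed

lemma upper_right_inverse_rec:
  assumes "upper U" and "upper V" and "mmul U V = idm" and "i \<le> k"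
  shows "U i i * V i k = idm i k - (\<Sum>m\<in>{i<..k}. U i m * V m k)"
proof -
  have "idm i k = (\<Sum>m\<le>k. U i m * V m k)"
    using assms by (simp add: upper_def mmul_upper_right[symmetric])
  then show ?thesis
    using upper_row_sum_split[OF assms(1,4)] by simp
qed

text \<open>Columns of the triangular inverses, computed by forward and backward substitution;
  \<open>ltinv_col S k i\<close> and \<open>utinv_col U k i\<close> are the entries in row \<open>i\<close>, column \<open>k\<close>.\<close>

function ltinv_col :: "mat \<Rightarrow> nat \<Rightarrow> nat \<Rightarrow> real" where
  "ltinv_col S k i =
     (if i < k then 0 else if i = k then 1 else - (\<Sum>m<i. S i m * ltinv_col S k m))"
  by pat_completeness auto
termination
  by (relation "Wellfounded.measure (\<lambda>(S, k, i). i)") auto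

function utinv_col :: "mat \<Rightarrow> nat \<Rightarrow> nat \<Rightarrow> real" where
  "utinv_col U k i =
     (if k < i then 0 else (idm i k - (\<Sum>m\<in>{i<..k}. U i m * utinv_col U k m)) / U i i)"
  by pat_completeness auto
termination
  by (relation "Wellfounded.measure (\<lambda>(U, k, i). k - i)") auto

declare ltinv_col.simps [simp del] utinv_col.simps [simp del]

lemma unit_lower_ltinv_col: "unit_lower (\<lambda>i k. ltinv_col S k i)"
  unfolding unit_lower_def by (auto simp: ltinv_col.simps)

lemma mmul_ltinv_col:
  assumes "unit_lower S"
  shows "mmul S (\<lambda>i k. ltinv_col S k i) = idm"
proof (intro ext)
  fix i k
  have "mmul S (\<lambda>i k. ltinv_col S k i) i k = ltinv_col S k i + (\<Sum>m<i. S i m * ltinv_col S k m)"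
    using assms by (simp add: unit_lower_def mmul_lower_left lessThan_Suc_atMost[symmetric])
  also have "\<dots> = idm i k"
    by (subst ltinv_col.simps) (auto simp: idm_def ltinv_col.simps[of S k])
  finally show "mmul S (\<lambda>i k. ltinv_col S k i) i k = idm i k" .
qed

lemma unit_lower_right_inverse_unique:
  assumes "unit_lower S" and "mmul S T = idm" and "mmul S T' = idm"
  shows "T = T'"
proof -
  have "\<forall>k. T i k = T' i k" for i
  proof (induction i rule: less_induct)
    case (less i)
    show ?case
    proof
      fix k
      have "(\<Sum>m<i. S i m * T m k) = (\<Sum>m<i. S i m * T' m k)"
        using less by simp
      then show "T i k = T' i k"
        using unit_lower_right_inverse_rec[OF assms(1,2), of i k]
          unit_lower_right_inverse_rec[OF assms(1,3), of i k] by simp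
    qed
  qed
  then show ?thesis
    by blast
qed

lemma ltinv_correct:
  assumes "unit_lower S"
  shows "unit_lower (ltinv S) \<and> mmul S (ltinv S) = idm"
  unfolding ltinv_def
  by (rule theI[of _ "\<lambda>i k. ltinv_col S k i"])
    (use assms unit_lower_ltinv_col mmul_ltinv_col unit_lower_right_inverse_unique in blast)+

lemma upper_utinv_col: "upper (\<lambda>i k. utinv_col U k i)"
  unfolding upper_def by (auto simp: utinv_col.simps)

lemma mmul_utinv_col:
  assumes "upper_invertible U"
  shows "mmul U (\<lambda>i k. utinv_col U k i) = idm"
proof (intro ext)
  fix i k
  show "mmul U (\<lambda>i k. utinv_col U k i) i k = idm i k"
  proof (cases "i \<le> k")
    case True
    have "mmul U (\<lambda>i k. utinv_col U k i) i k
        = U i i * utinv_col U k i + (\<Sum>m\<in>{i<..k}. U i m * utinv_col U k m)"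
      using assms True upper_utinv_col[of U] upper_row_sum_split[of U i k]
      unfolding upper_invertible_def upper_def by (simp add: mmul_upper_right)
    then show ?thesis
      using assms True by (simp add: upper_invertible_def utinv_col.simps[of U k i])
  next
    case False
    then show ?thesis
      using assms upper_utinv_col[of U]
      by (simp add: mmul_upper_right upper_invertible_def upper_def idm_def)
  qed
qed

lemma upper_right_inverse_unique:
  assumes U: "upper_invertible U"
    and "upper V" "mmul U V = idm" and "upper V'" "mmul U V' = idm"
  shows "V = V'"
proof -
  have "V i k = V' i k" for i k
  proof (induction "k - i" arbitrary: i rule: less_induct)
    case less
    show ?case
    proof (cases "i \<le> k")
      case True
      then have "U i i * V i k = U i i * V' i k"
        using assms less upper_right_inverse_rec[of U _ i k] unfolding upper_invertible_def
        by (simp add: diff_less_mono2)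
      then show ?thesis
        using U by (simp add: upper_invertible_def)
    qed (use assms in \<open>simp add: upper_def\<close>)
  qed
  then show ?thesis
    by blast
qed

lemma utinv_correct:
  assumes "upper_invertible U"
  shows "upper (utinv U) \<and> mmul U (utinv U) = idm"
  unfolding utinv_def
  by (rule theI[of _ "\<lambda>i k. utinv_col U k i"])
    (use assms upper_utinv_col mmul_utinv_col upper_right_inverse_unique in blast)+

section \<open>Invariance of the dressed objects\<close>

locale invariant_factorization =
  fixes p1 p2 j :: nat and t :: times and S Sb G :: "times \<Rightarrow> mat"
  assumes fin_t: "fin_times t"
    and S_unit_lower: "\<And>t. fin_times t \<Longrightarrow> unit_lower (S t)"
    and Sb_upper_invertible: "\<And>t. fin_times t \<Longrightarrow> upper_invertible (Sb t)"
    and factorization: "\<And>t. fin_times t \<Longrightarrow> G t = mmul (ltinv (S t)) (Sb t)"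
    and S_smooth: "\<And>i k. diag_differentiable p1 p2 j t (\<lambda>t'. S t' i k)"
    and Sb_smooth: "\<And>i k. diag_differentiable p1 p2 j t (\<lambda>t'. Sb t' i k)"
    and G_invariant: "\<And>i k. diag_differentiable p1 p2 j t (\<lambda>t'. G t' i k)
                        \<Longrightarrow> diag_deriv p1 p2 j t (\<lambda>t'. G t' i k) = 0"
begin

abbreviation \<delta> :: "(times \<Rightarrow> real) \<Rightarrow> real" where
  "\<delta> \<equiv> diag_deriv p1 p2 j t"

abbreviation smooth :: "(times \<Rightarrow> real) \<Rightarrow> bool" where
  "smooth \<equiv> diag_differentiable p1 p2 j t"

abbreviation invariant :: "(times \<Rightarrow> real) \<Rightarrow> bool" where
  "invariant \<equiv> diag_invariant p1 p2 j t"

abbreviation Sinv :: "times \<Rightarrow> mat" where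
  "Sinv t' \<equiv> ltinv (S t')"

abbreviation Sbinv :: "times \<Rightarrow> mat" where
  "Sbinv t' \<equiv> utinv (Sb t')"

lemma S_lower: "fin_times t' \<Longrightarrow> i < m \<Longrightarrow> S t' i m = 0"
  using S_unit_lower by (simp add: unit_lower_def)

lemma Sb_upper: "fin_times t' \<Longrightarrow> k < i \<Longrightarrow> Sb t' i k = 0"
  using Sb_upper_invertible by (simp add: upper_invertible_def upper_def)

lemma Sb_diag: "fin_times t' \<Longrightarrow> Sb t' i i \<noteq> 0"
  using Sb_upper_invertible by (simp add: upper_invertible_def)

lemma Sinv: "fin_times t' \<Longrightarrow> unit_lower (Sinv t') \<and> mmul (S t') (Sinv t') = idm"
  by (simp add: S_unit_lower ltinv_correct)

lemma Sinv_lower: "fin_times t' \<Longrightarrow> i < m \<Longrightarrow> Sinv t' i m = 0"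
  using Sinv by (simp add: unit_lower_def)

lemma Sbinv: "fin_times t' \<Longrightarrow> upper (Sbinv t') \<and> mmul (Sb t') (Sbinv t') = idm"
  by (simp add: Sb_upper_invertible utinv_correct)

lemma Sbinv_upper: "fin_times t' \<Longrightarrow> k < m \<Longrightarrow> Sbinv t' m k = 0"
  using Sbinv by (simp add: upper_def)

lemma smooth_Sinv: "smooth (\<lambda>t'. Sinv t' i k)"
proof (induction i arbitrary: k rule: less_induct)
  case (less i)
  show ?case
  proof (rule diag_differentiable_cong[OF fin_t])
    show "Sinv t' i k = idm i k - (\<Sum>m<i. S t' i m * Sinv t' m k)" if "fin_times t'" for t'
      using that S_unit_lower Sinv by (blast intro: unit_lower_right_inverse_rec)
    show "smooth (\<lambda>t'. idm i k - (\<Sum>m<i. S t' i m * Sinv t' m k))"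
      using less S_smooth by (intro diag_differentiable_intros) auto
  qed
qed

lemma smooth_Sbinv: "smooth (\<lambda>t'. Sbinv t' i k)"
proof (induction "k - i" arbitrary: i rule: less_induct)
  case less
  show ?case
  proof (cases "i \<le> k")
    case True
    show ?thesis
    proof (rule diag_differentiable_cong[OF fin_t])
      show "Sbinv t' i k = (idm i k - (\<Sum>m\<in>{i<..k}. Sb t' i m * Sbinv t' m k)) / Sb t' i i"
        if "fin_times t'" for t'
        using upper_right_inverse_rec[of "Sb t'" "Sbinv t'" i k] Sbinv[OF that] True
          Sb_upper_invertible[OF that] Sb_diag[OF that]
        by (simp add: upper_invertible_def field_simps)
      have "smooth (\<lambda>t'. Sbinv t' m k)" if "m \<in> {i<..k}" for m
        using that by (intro less(1)) auto
      then show "smooth (\<lambda>t'. (idm i k - (\<Sum>m\<in>{i<..k}. Sb t' i m * Sbinv t' m k)) / Sb t' i i)"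
        using Sb_smooth Sb_diag[OF fin_t] by (intro diag_differentiable_intros) auto
    qed
  next
    case False
    then show ?thesis
      using diag_invariant_if_const[OF fin_t, of _ 0] Sbinv_upper
      by (simp add: diag_invariant_def)
  qed
qed

lemma delta_factorization:
  "(\<Sum>m\<le>i. Sinv t i m * \<delta> (\<lambda>t'. Sb t' m k) + \<delta> (\<lambda>t'. Sinv t' i m) * Sb t m k) = 0"
proof -
  have G: "G t' i k = (\<Sum>m\<le>i. Sinv t' i m * Sb t' m k)" if "fin_times t'" for t'
    using that by (simp add: factorization mmul_lower_left Sinv_lower)
  have "smooth (\<lambda>t'. \<Sum>m\<le>i. Sinv t' i m * Sb t' m k)"
    using smooth_Sinv Sb_smooth by (intro diag_differentiable_intros) auto
  moreover have "smooth (\<lambda>t'. G t' i k) \<longleftrightarrow> smooth (\<lambda>t'. \<Sum>m\<le>i. Sinv t' i m * Sb t' m k)"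
    by (rule diag_cong(1)[OF fin_t]) (rule G)
  moreover have "\<delta> (\<lambda>t'. G t' i k) = \<delta> (\<lambda>t'. \<Sum>m\<le>i. Sinv t' i m * Sb t' m k)"
    by (rule diag_cong(2)[OF fin_t]) (rule G)
  ultimately have "\<delta> (\<lambda>t'. \<Sum>m\<le>i. Sinv t' i m * Sb t' m k) = 0"
    using G_invariant by simp
  then show ?thesis
    using smooth_Sinv Sb_smooth by (simp add: diag_deriv_sum_mult)
qed

text \<open>The side conditions hold because the entries of \<open>S^{-1}\<close> on and above the diagonal,
  and those of \<open>Sbar\<close> below it, are constant.\<close>

lemma delta_Sinv_Sb: "\<delta> (\<lambda>t'. Sinv t' i k) = 0 \<and> \<delta> (\<lambda>t'. Sb t' i k) = 0"
proof (rule unit_lower_upper_split_null[where L="Sinv t" and U="Sb t"])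
  show "unit_lower (Sinv t)" "upper_invertible (Sb t)"
    using Sinv Sb_upper_invertible fin_t by blast+
  show "\<delta> (\<lambda>t'. Sinv t' i k) = 0" if "i \<le> k" for i k
  proof -
    have "Sinv t' i k = idm i k" if "fin_times t'" for t'
      using Sinv[OF that] \<open>i \<le> k\<close> by (auto simp: unit_lower_def idm_def)
    then show ?thesis
      using diag_invariant_if_const[OF fin_t] by (simp add: diag_invariant_def)
  qed
  show "upper (\<lambda>i k. \<delta> (\<lambda>t'. Sb t' i k))"
    unfolding upper_def
    using diag_invariant_if_const[OF fin_t, of _ 0] Sb_upper by (simp add: diag_invariant_def)
qed (rule delta_factorization)

lemma delta_S: "\<delta> (\<lambda>t'. S t' i k) = 0"
proof (cases "k \<le> i")
  case True
  have "(\<Sum>m\<le>i. S t' i m * Sinv t' m k) = idm i k" if "fin_times t'" for t' k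
    using Sinv[OF that] mmul_lower_left[where A="S t'" and B="Sinv t'"] S_lower[OF that] by simp
  then have "(\<Sum>m\<le>i. S t i m * \<delta> (\<lambda>t'. Sinv t' m k) + \<delta> (\<lambda>t'. S t' i m) * Sinv t m k) = 0"
    for k
    using S_smooth smooth_Sinv by (intro diag_deriv_sum_mult_const[OF fin_t]) auto
  then have "(\<Sum>m\<le>i. mtr (Sinv t) k m * \<delta> (\<lambda>t'. S t' i m)) = 0" for k
    using delta_Sinv_Sb by (simp add: mtr_def mult.commute)
  moreover have "upper (mtr (Sinv t))"
    using Sinv_lower[OF fin_t] by (simp add: upper_def mtr_def)
  moreover have "mtr (Sinv t) k k \<noteq> 0" for k
    using Sinv[OF fin_t] by (simp add: mtr_def unit_lower_def)
  ultimately show ?thesis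
    using upper_triangular_null[where y="\<lambda>m. \<delta> (\<lambda>t'. S t' i m)"] True by blast
next
  case False
  then show ?thesis
    using diag_invariant_if_const[OF fin_t, of _ 0] S_lower by (simp add: diag_invariant_def)
qed

lemma delta_Sbinv: "\<delta> (\<lambda>t'. Sbinv t' i k) = 0"
proof (cases "i \<le> k")
  case True
  have "(\<Sum>m\<le>k. Sb t' i m * Sbinv t' m k) = idm i k" if "fin_times t'" for t' i
    using Sbinv[OF that] mmul_upper_right[where A="Sb t'" and B="Sbinv t'"] Sbinv_upper[OF that]
    by simp
  then have "(\<Sum>m\<le>k. Sb t i m * \<delta> (\<lambda>t'. Sbinv t' m k) + \<delta> (\<lambda>t'. Sb t' i m) * Sbinv t m k) = 0"
    for i
    using Sb_smooth smooth_Sbinv by (intro diag_deriv_sum_mult_const[OF fin_t]) auto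
  then have "(\<Sum>m\<le>k. Sb t i m * \<delta> (\<lambda>t'. Sbinv t' m k)) = 0" for i
    using delta_Sinv_Sb by simp
  then show ?thesis
    using Sb_upper_invertible[OF fin_t] Sb_diag[OF fin_t] True
    by (intro upper_triangular_null[where U="Sb t" and k=k and y="\<lambda>m. \<delta> (\<lambda>t'. Sbinv t' m k)"])
      (auto simp: upper_invertible_def)
next
  case False
  then show ?thesis
    using diag_invariant_if_const[OF fin_t, of _ 0] Sbinv_upper by (simp add: diag_invariant_def)
qed

lemma invariant_S: "invariant (\<lambda>t'. S t' i k)"
  using S_smooth delta_S by (simp add: diag_invariant_def)

lemma invariant_Sb: "invariant (\<lambda>t'. Sb t' i k)"
  using Sb_smooth delta_Sinv_Sb by (simp add: diag_invariant_def)

lemma invariant_Sinv: "invariant (\<lambda>t'. Sinv t' i k)"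
  using smooth_Sinv delta_Sinv_Sb by (simp add: diag_invariant_def)

lemma invariant_Sbinv: "invariant (\<lambda>t'. Sbinv t' i k)"
  using smooth_Sbinv delta_Sbinv by (simp add: diag_invariant_def)

lemma invariant_dressed_lower:
  assumes "\<And>r. finite {m. \<Lambda> r m \<noteq> 0}"
  shows "invariant (\<lambda>t'. mmul (mmul (S t') \<Lambda>) (Sinv t') i k)"
proof (rule diag_invariant_cong[OF fin_t])
  define C where "C = (\<Union>r\<le>i. {m. \<Lambda> r m \<noteq> 0})"
  have "finite C"
    using assms by (simp add: C_def)
  show "mmul (mmul (S t') \<Lambda>) (Sinv t') i k = (\<Sum>m\<in>C. (\<Sum>r\<le>i. S t' i r * \<Lambda> r m) * Sinv t' m k)"
    if "fin_times t'" for t'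
  proof -
    have row: "mmul (S t') \<Lambda> i m = (\<Sum>r\<le>i. S t' i r * \<Lambda> r m)" for m
      using S_lower[OF that] by (rule mmul_lower_left)
    show ?thesis
      unfolding mmul_def[of "mmul (S t') \<Lambda>"] row
      using \<open>finite C\<close> by (intro suminf_finite) (auto simp: C_def)
  qed
  show "invariant (\<lambda>t'. \<Sum>m\<in>C. (\<Sum>r\<le>i. S t' i r * \<Lambda> r m) * Sinv t' m k)"
    using \<open>finite C\<close> invariant_S invariant_Sinv by (intro diag_invariant_intros) auto
qed

lemma invariant_dressed_upper:
  assumes "\<And>r. finite {m. \<Lambda> r m \<noteq> 0}"
  shows "invariant (\<lambda>t'. mmul (mmul (Sb t') (mtr \<Lambda>)) (Sbinv t') i k)"
proof (rule diag_invariant_cong[OF fin_t])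
  show "mmul (mmul (Sb t') (mtr \<Lambda>)) (Sbinv t') i k
      = (\<Sum>m\<le>k. (\<Sum>r\<in>{r. \<Lambda> m r \<noteq> 0}. Sb t' i r * \<Lambda> m r) * Sbinv t' m k)"
    if "fin_times t'" for t'
  proof -
    have "mmul (Sb t') (mtr \<Lambda>) i m = (\<Sum>r\<in>{r. \<Lambda> m r \<noteq> 0}. Sb t' i r * \<Lambda> m r)" for m
      unfolding mmul_def mtr_def using assms by (intro suminf_finite) auto
    then show ?thesis
      by (simp add: mmul_upper_right Sbinv_upper[OF that])
  qed
  show "invariant (\<lambda>t'. \<Sum>m\<le>k. (\<Sum>r\<in>{r. \<Lambda> m r \<noteq> 0}. Sb t' i r * \<Lambda> m r) * Sbinv t' m k)"
    using assms invariant_Sb invariant_Sbinv by (intro diag_invariant_intros) auto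
qed

lemma invariant_wave: "invariant (\<lambda>t'. mvec (S t') v i)"
proof (rule diag_invariant_cong[OF fin_t])
  show "mvec (S t') v i = (\<Sum>m\<le>i. S t' i m * v m)" if "fin_times t'" for t'
    using S_lower[OF that] by (rule mvec_lower)
  show "invariant (\<lambda>t'. \<Sum>m\<le>i. S t' i m * v m)"
    using invariant_S by (intro diag_invariant_intros) auto
qed

lemma invariant_adjoint_wave: "invariant (\<lambda>t'. mvec (mtr (Sbinv t')) v i)"
proof (rule diag_invariant_cong[OF fin_t])
  show "mvec (mtr (Sbinv t')) v i = (\<Sum>m\<le>i. Sbinv t' m i * v m)" if "fin_times t'" for t'
    using Sbinv_upper[OF that] by (simp add: mvec_lower mtr_def)
  show "invariant (\<lambda>t'. \<Sum>m\<le>i. Sbinv t' m i * v m)"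
    using invariant_Sbinv by (intro diag_invariant_intros) auto
qed

end

theorem proposition3p10:
  fixes M :: "real measure" and I :: "real set"
    and p1 p2 :: nat and n1 n2 :: "nat \<Rightarrow> nat"
    and w1 w2 :: "nat \<Rightarrow> real \<Rightarrow> real"
    and S Sb :: "times \<Rightarrow> mat"
    and j a' b' :: nat and t :: times
  assumes interval: "is_interval I"
    and borel: "sets M = sets borel"
    and finite: "finite_measure M"
    and supp: "emeasure M (UNIV - I) = 0"
    and p1: "1 \<le> p1" and p2: "1 \<le> p2"
    and n1: "\<forall>a\<in>{1..p1}. 1 \<le> n1 a" and n2: "\<forall>b\<in>{1..p2}. 1 \<le> n2 b"
    and integrable: "\<forall>t i k. fin_times t \<longrightarrow> integrable M (\<lambda>x.
            x ^ (kidx p1 n1 i + kidx p2 n2 k) * w1 (aidx p1 n1 i) x * w2 (aidx p2 n2 k) x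
            * exp ((\<Sum>j. fst t (Suc j) (aidx p1 n1 i) * x ^ Suc j)
                   - (\<Sum>j. snd t (Suc j) (aidx p2 n2 k) * x ^ Suc j)))"
    and S_tri: "\<forall>t. fin_times t \<longrightarrow> unit_lower (S t)"
    and Sb_tri: "\<forall>t. fin_times t \<longrightarrow> upper_invertible (Sb t)"
    and factor: "\<forall>t. fin_times t \<longrightarrow>
                   gt M p1 n1 w1 p2 n2 w2 t = mmul (ltinv (S t)) (Sb t)"
    and smooth1: "\<forall>t. fin_times t \<longrightarrow> (\<forall>jj\<ge>1. \<forall>a\<in>{1..p1}. \<forall>i k.
                    (\<lambda>s. S (upd1 t jj a s) i k) differentiable (at (fst t jj a)) \<and>
                    (\<lambda>s. Sb (upd1 t jj a s) i k) differentiable (at (fst t jj a)))"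
    and smooth2: "\<forall>t. fin_times t \<longrightarrow> (\<forall>jj\<ge>1. \<forall>b\<in>{1..p2}. \<forall>i k.
                    (\<lambda>s. S (upd2 t jj b s) i k) differentiable (at (snd t jj b)) \<and>
                    (\<lambda>s. Sb (upd2 t jj b s) i k) differentiable (at (snd t jj b)))"
    and t: "fin_times t"
    and j: "1 \<le> j" and a': "a' \<in> {1..p1}" and b': "b' \<in> {1..p2}"
  shows
    "(\<forall>i k. (\<Sum>a=1..p1. D1 j a (\<lambda>t. mmul (mmul (S t) (Lam p1 n1 a')) (ltinv (S t)) i k) t)
         + (\<Sum>b=1..p2. D2 j b (\<lambda>t. mmul (mmul (S t) (Lam p1 n1 a')) (ltinv (S t)) i k) t) = 0) \<and>
    (\<forall>i k. (\<Sum>a=1..p1. D1 j a (\<lambda>t. mmul (mmul (Sb t) (mtr (Lam p2 n2 b'))) (utinv (Sb t)) i k) t)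
         + (\<Sum>b=1..p2. D2 j b (\<lambda>t. mmul (mmul (Sb t) (mtr (Lam p2 n2 b'))) (utinv (Sb t)) i k) t) = 0) \<and>
    (\<forall>x i. (\<Sum>a=1..p1. D1 j a (\<lambda>t. mvec (S t) (chi p1 n1 a' x) i) t)
         + (\<Sum>b=1..p2. D2 j b (\<lambda>t. mvec (S t) (chi p1 n1 a' x) i) t) = 0) \<and>
    (\<forall>x i. (\<Sum>a=1..p1. D1 j a (\<lambda>t. mvec (mtr (utinv (Sb t))) (chi p2 n2 b' x) i) t)
         + (\<Sum>b=1..p2. D2 j b (\<lambda>t. mvec (mtr (utinv (Sb t))) (chi p2 n2 b' x) i) t) = 0)"
proof -
  let ?G = "gt M p1 n1 w1 p2 n2 w2"
  have S_smooth: "diag_differentiable p1 p2 j t (\<lambda>t'. S t' i k)"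
    and Sb_smooth: "diag_differentiable p1 p2 j t (\<lambda>t'. Sb t' i k)" for i k
    using smooth1[rule_format, OF t j] smooth2[rule_format, OF t j]
    by (simp_all add: diag_differentiable_def)
  interpret invariant_factorization p1 p2 j t S Sb ?G
    using t S_tri Sb_tri factor S_smooth Sb_smooth diag_deriv_gt[OF t j p1 n1 p2 n2]
    by unfold_locales blast+
  show ?thesis
    using invariant_dressed_lower[OF finite_Lam_row_support[OF p1 n1]]
      invariant_dressed_upper[OF finite_Lam_row_support[OF p2 n2]]
      invariant_wave invariant_adjoint_wave
    by (simp add: diag_invariant_def diag_deriv_def)
qed

end
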